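(* Let $T$ be a string of length $n$ and $1<i\le j\le n$. For any interval $[s,t]$ with $i\le s\le t\le j$, we have $[s,t]\notin\mathsf{MUS}(T[i-1..j])$ and $[s,t]\in\mathsf{MUS}(T[i..j])$ if and only if $T[s..t]=\mathit{sqp}_{i-1,j}$ (as strings) and $\#\mathit{occ}_{T[i-1..j]}(\mathit{sqp}_{i-1,j})=2$.
   Context: $T[a..b]$ denotes the substring of $T$ from position $a$ to $b$. For strings $S,w$, $\#\mathit{occ}_S(w)$ is the number of positions at which $w$ occurs in $S$, with $\#\mathit{occ}_S(\varepsilon)=|S|+1$. A substring $w$ of $S$ is unique in $S$ if $\#\mathit{occ}_S(w)=1$ and repeating if $\#\mathit{occ}_S(w)\ge 2$. For $1\le i\le j\le n$, $\mathsf{MUS}(T[i..j])$ is the set of intervals $[s,t]$ (positions in $T$) with $i\le s\le t\le j$ such that $T[s..t]$ is unique in $T[i..j]$ and every proper substring of $T[s..t]$ (including the empty string) is repeating in $T[i..j]$. $\mathit{sqp}_{i,j}$ is the shortest (non-empty) prefix of $T[i..j]$ that occurs at most twice in $T[i..j]$. *)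

theory Defs
  imports Main
begin

text \<open>Strings are lists; positions are 1-based. substr T a b is T[a..b].\<close>
definition substr :: "'a list \<Rightarrow> nat \<Rightarrow> nat \<Rightarrow> 'a list" where
  "substr T a b = take (Suc b - a) (drop (a - 1) T)"

text \<open>Number of (0-based) positions at which w occurs in S; occ S [] = length S + 1.\<close>
definition occ :: "'a list \<Rightarrow> 'a list \<Rightarrow> nat" where
  "occ S w = card {k. k + length w \<le> length S \<and> take (length w) (drop k S) = w}"

definition unique_in :: "'a list \<Rightarrow> 'a list \<Rightarrow> bool" where
  "unique_in S w \<longleftrightarrow> occ S w = 1"

definition repeating_in :: "'a list \<Rightarrow> 'a list \<Rightarrow> bool" where
  "repeating_in S w \<longleftrightarrow> occ S w \<ge> 2"

definition proper_substrings :: "'a list \<Rightarrow> 'a list set" where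
  "proper_substrings u = {take l (drop k u) | k l. k + l \<le> length u \<and> l < length u}"

text \<open>MUS(T[i..j]) as a set of intervals [s,t] of positions in T.\<close>
definition MUS :: "'a list \<Rightarrow> nat \<Rightarrow> nat \<Rightarrow> (nat \<times> nat) set" where
  "MUS T i j = {(s, t). i \<le> s \<and> s \<le> t \<and> t \<le> j
      \<and> unique_in (substr T i j) (substr T s t)
      \<and> (\<forall>w \<in> proper_substrings (substr T s t). repeating_in (substr T i j) w)}"

definition sqp :: "'a list \<Rightarrow> nat \<Rightarrow> nat \<Rightarrow> 'a list" where
  "sqp T i j = (let S = substr T i j in
     take (LEAST l. 1 \<le> l \<and> l \<le> length S \<and> occ S (take l S) \<le> 2) S)"

end

theory Submission
  imports Defs
begin

text \<open>Prepending a character c to S' raises the number of occurrences of a word by one if the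
  word is a prefix of c # S', and leaves it unchanged otherwise. Hence a MUS u of S' stops being
  a MUS of c # S' exactly when u becomes a prefix of c # S' occurring twice: its proper prefixes,
  which repeat in S', then occur at least three times in c # S', so u is the shortest prefix
  occurring at most twice. Conversely, for u = sqp with two occurrences, the second occurrence
  of u lies inside S' and, together with the one at the front, shows that every substring of u
  that is not a prefix still repeats in S'.\<close>

definition occurs_at :: "'a list \<Rightarrow> 'a list \<Rightarrow> nat \<Rightarrow> bool" where
  "occurs_at S w k \<longleftrightarrow> k + length w \<le> length S \<and> take (length w) (drop k S) = w"

lemma occ_eq_card_occurs_at: "occ S w = card {k. occurs_at S w k}"
  by (simp add: occ_def occurs_at_def)

lemma finite_occurs_at: "finite {k. occurs_at S w k}"
  by (rule finite_subset[of _ "{..length S}"]) (auto simp: occurs_at_def)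

lemma occurs_at_0_iff: "occurs_at S w 0 \<longleftrightarrow> take (length w) S = w"
  by (auto simp: occurs_at_def dest: arg_cong[where f = length])

lemma occurs_at_Cons_Suc [simp]: "occurs_at (c # S) w (Suc k) \<longleftrightarrow> occurs_at S w k"
  by (simp add: occurs_at_def)

lemma occurs_at_trans:
  assumes "occurs_at u w k" "occurs_at S u p"
  shows "occurs_at S w (p + k)"
proof -
  have "take (length w) (drop (p + k) S) = take (length w) (drop k (take (length u) (drop p S)))"
    using assms(1) by (auto simp: occurs_at_def drop_take add.commute min_def)
  also have "\<dots> = w"
    using assms by (simp add: occurs_at_def)
  finally show ?thesis
    using assms by (simp add: occurs_at_def)
qed

lemma occ_Nil: "occ S [] = Suc (length S)"
  by (simp add: occ_def atMost_def[symmetric])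

lemma occ_Cons: "occ (c # S) w = occ S w + (if take (length w) (c # S) = w then 1 else 0)"
proof -
  have "{k. occurs_at (c # S) w k} =
      (if take (length w) (c # S) = w then {0} else {}) \<union> Suc ` {k. occurs_at S w k}"
  proof (rule set_eqI)
    fix k
    show "k \<in> {k. occurs_at (c # S) w k} \<longleftrightarrow>
        k \<in> (if take (length w) (c # S) = w then {0} else {}) \<union> Suc ` {k. occurs_at S w k}"
      by (cases k) (auto simp: occurs_at_0_iff[symmetric])
  qed
  moreover have "0 \<notin> Suc ` {k. occurs_at S w k}"
    by auto
  ultimately show ?thesis
    by (simp add: occ_eq_card_occurs_at card_image finite_occurs_at)
qed

lemma length_le_if_occ_pos: "0 < occ S w \<Longrightarrow> length w \<le> length S"
  by (auto simp: occ_eq_card_occurs_at card_gt_0_iff occurs_at_def)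

lemma two_le_occI:
  assumes "occurs_at S w a" "occurs_at S w b" "a \<noteq> b"
  shows "2 \<le> occ S w"
proof -
  have "{a, b} \<subseteq> {k. occurs_at S w k}"
    using assms by auto
  then have "card {a, b} \<le> occ S w"
    by (simp add: occ_eq_card_occurs_at card_mono finite_occurs_at)
  then show ?thesis
    using assms(3) by simp
qed

lemma occurs_at_other:
  assumes "occ S w = 2"
  obtains q where "occurs_at S w q" "q \<noteq> k"
proof -
  have "card ({q. occurs_at S w q} - {k}) \<noteq> 0"
    using assms card_Diff_singleton_if[of "{q. occurs_at S w q}" k]
    by (simp add: occ_eq_card_occurs_at finite_occurs_at)
  then obtain q where "q \<in> {q. occurs_at S w q} - {k}"
    by (metis card.empty ex_in_conv)
  then show ?thesis
    using that by blast
qed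

lemma proper_substrings_iff:
  "w \<in> proper_substrings u \<longleftrightarrow> length w < length u \<and> (\<exists>k. occurs_at u w k)"
  by (auto simp: proper_substrings_def occurs_at_def) metis

lemma substr_eq_Cons:
  assumes "0 < a" "a \<le> j" "a \<le> length T"
  shows "substr T a j = T ! (a - 1) # substr T (Suc a) j"
proof -
  have "drop (a - 1) T = T ! (a - 1) # drop a T"
    using assms Cons_nth_drop_Suc[of "a - 1" T] by simp
  moreover have "Suc j - a = Suc (j - a)"
    using assms(2) by simp
  ultimately show ?thesis
    by (simp add: substr_def)
qed

definition minimal_unique_in :: "'a list \<Rightarrow> 'a list \<Rightarrow> bool" where
  "minimal_unique_in S u \<longleftrightarrow> unique_in S u \<and> (\<forall>w \<in> proper_substrings u. repeating_in S w)"

lemma MUS_iff_minimal_unique_in: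
  assumes "i \<le> s" "s \<le> t" "t \<le> j"
  shows "(s, t) \<in> MUS T i j \<longleftrightarrow> minimal_unique_in (substr T i j) (substr T s t)"
  using assms by (auto simp: MUS_def minimal_unique_in_def)

definition shortest_quasi_unique_prefix :: "'a list \<Rightarrow> 'a list" where
  "shortest_quasi_unique_prefix S =
     take (LEAST l. 1 \<le> l \<and> l \<le> length S \<and> occ S (take l S) \<le> 2) S"

lemma sqp_eq_shortest_quasi_unique_prefix:
  "sqp T i j = shortest_quasi_unique_prefix (substr T i j)"
  by (simp add: sqp_def shortest_quasi_unique_prefix_def Let_def)

lemma shortest_quasi_unique_prefix_eqI:
  assumes "u \<noteq> []" "take (length u) S = u" "occ S u \<le> 2"
    and "\<And>l. 1 \<le> l \<Longrightarrow> l < length u \<Longrightarrow> 2 < occ S (take l S)"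
  shows "shortest_quasi_unique_prefix S = u"
proof -
  let ?P = "\<lambda>l. 1 \<le> l \<and> l \<le> length S \<and> occ S (take l S) \<le> 2"
  have "(LEAST l. ?P l) = length u"
  proof (rule Least_equality)
    show "?P (length u)"
      using assms(1-3) by (auto simp: Suc_le_eq dest: arg_cong[where f = length])
    show "length u \<le> l" if "?P l" for l
      using that assms(4)[of l] by (meson not_le)
  qed
  then show ?thesis
    using assms(2) by (simp add: shortest_quasi_unique_prefix_def)
qed

lemma shortest_quasi_unique_prefix_minimal:
  assumes "shortest_quasi_unique_prefix S = u" "u \<noteq> []" "occ S u \<le> 2"
    and "1 \<le> l" "l < length u"
  shows "2 < occ S (take l S)"
proof -
  let ?P = "\<lambda>l. 1 \<le> l \<and> l \<le> length S \<and> occ S (take l S) \<le> 2"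
  have u: "u = take (LEAST l. ?P l) S"
    using assms(1) by (simp add: shortest_quasi_unique_prefix_def)
  then have "?P (length u)"
    using assms(2,3) by (auto simp: Suc_le_eq min_def)
  then have "?P (LEAST l. ?P l)"
    by (rule LeastI)
  then have "length u = (LEAST l. ?P l)"
    using u by simp
  moreover have "l \<le> length S"
    using u assms(5) by simp
  ultimately show ?thesis
    using assms(4,5) not_less_Least[of l ?P] by simp
qed

lemma minimal_unique_in_lost_by_Cons:
  assumes "u \<noteq> []" "minimal_unique_in S u" "\<not> minimal_unique_in (c # S) u"
  shows "u = shortest_quasi_unique_prefix (c # S) \<and> occ (c # S) u = 2"
proof -
  have "repeating_in (c # S) w" if "w \<in> proper_substrings u" for w
    using assms(2) that occ_Cons[of c S w] by (auto simp: minimal_unique_in_def repeating_in_def)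
  then have "\<not> unique_in (c # S) u"
    using assms(3) by (auto simp: minimal_unique_in_def)
  moreover have "occ S u = 1"
    using assms(2) by (simp add: minimal_unique_in_def unique_in_def)
  ultimately have prefix: "take (length u) (c # S) = u" and twice: "occ (c # S) u = 2"
    using occ_Cons[of c S u] by (auto simp: unique_in_def split: if_splits)
  have "2 < occ (c # S) (take l (c # S))" if "1 \<le> l" "l < length u" for l
  proof -
    have "take l (c # S) = take l u"
      using prefix that by (metis min.strict_order_iff take_take)
    moreover have "occurs_at u (take l u) 0"
      using that by (simp add: occurs_at_def min_def)
    then have "take l u \<in> proper_substrings u"
      using that by (auto simp: proper_substrings_iff)
    ultimately have "2 \<le> occ S (take l (c # S))"
      using assms(2) by (simp add: minimal_unique_in_def repeating_in_def)
    then show ?thesis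
      using occ_Cons[of c S "take l (c # S)"] by (simp add: min_def)
  qed
  then show ?thesis
    using shortest_quasi_unique_prefix_eqI[OF assms(1) prefix] twice by simp
qed

lemma minimal_unique_in_if_shortest_quasi_unique_prefix_Cons:
  assumes "u \<noteq> []" "shortest_quasi_unique_prefix (c # S) = u" "occ (c # S) u = 2"
  shows "minimal_unique_in S u"
proof -
  have prefix: "take (length u) (c # S) = u"
    using assms(2) by (auto simp: shortest_quasi_unique_prefix_def min_def)
  then have once: "occ S u = 1"
    using occ_Cons[of c S u] assms(3) by simp
  then have "0 < length S"
    using length_le_if_occ_pos[of S u] assms(1) by auto
  obtain q where q: "occurs_at (c # S) u q" "q \<noteq> 0"
    using occurs_at_other[OF assms(3)] by blast
  have "repeating_in S w" if "w \<in> proper_substrings u" for w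
  proof -
    from that obtain k where k: "occurs_at u w k" "length w < length u"
      by (auto simp: proper_substrings_iff)
    consider (empty) "w = []" | (proper_prefix) "w \<noteq> []" "k = 0" | (inner) "0 < k"
      by blast
    then show ?thesis
    proof cases
      case empty
      then show ?thesis
        using \<open>0 < length S\<close> by (simp add: repeating_in_def occ_Nil Suc_le_eq)
    next
      case proper_prefix
      have w: "take (length w) (c # S) = w"
        using occurs_at_trans[OF k(1), of "c # S" 0] prefix proper_prefix
        by (simp add: occurs_at_0_iff)
      have "2 < occ (c # S) w"
        using shortest_quasi_unique_prefix_minimal[OF assms(2,1), of "length w"]
          assms(3) k(2) proper_prefix w by (simp add: Suc_le_eq)
      then show ?thesis
        using occ_Cons[of c S w] w by (simp add: repeating_in_def)
    next
      case inner
      then obtain k' where k': "k = Suc k'"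
        using not0_implies_Suc by blast
      have "occurs_at (c # S) w (Suc k')" "occurs_at (c # S) w (Suc (q + k'))"
        using occurs_at_trans[OF k(1), of "c # S" 0] prefix occurs_at_trans[OF k(1) q(1)] k'
        by (simp_all add: occurs_at_0_iff)
      then have "2 \<le> occ S w"
        using two_le_occI[of S w k' "q + k'"] q(2) by simp
      then show ?thesis
        by (simp add: repeating_in_def)
    qed
  qed
  then show ?thesis
    using once by (simp add: minimal_unique_in_def unique_in_def)
qed

lemma minimal_unique_in_lost_by_Cons_iff:
  assumes "u \<noteq> []"
  shows "(\<not> minimal_unique_in (c # S) u \<and> minimal_unique_in S u) \<longleftrightarrow>
         (u = shortest_quasi_unique_prefix (c # S) \<and>
          occ (c # S) (shortest_quasi_unique_prefix (c # S)) = 2)"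
    (is "_ \<longleftrightarrow> ?sqp")
proof
  assume "\<not> minimal_unique_in (c # S) u \<and> minimal_unique_in S u"
  then show ?sqp
    using minimal_unique_in_lost_by_Cons[OF assms] by auto
next
  assume ?sqp
  then have sqp: "shortest_quasi_unique_prefix (c # S) = u" and twice: "occ (c # S) u = 2"
    by auto
  have "\<not> minimal_unique_in (c # S) u"
    using twice by (simp add: minimal_unique_in_def unique_in_def)
  moreover have "minimal_unique_in S u"
    by (rule minimal_unique_in_if_shortest_quasi_unique_prefix_Cons[OF assms sqp twice])
  ultimately show "\<not> minimal_unique_in (c # S) u \<and> minimal_unique_in S u" ..
qed

theorem lemma17:
  fixes T :: "'a list" and i j s t :: nat
  assumes "1 < i" "i \<le> j" "j \<le> length T"
    and "i \<le> s" "s \<le> t" "t \<le> j"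
  shows "((s, t) \<notin> MUS T (i - 1) j \<and> (s, t) \<in> MUS T i j) \<longleftrightarrow>
         (substr T s t = sqp T (i - 1) j \<and> occ (substr T (i - 1) j) (sqp T (i - 1) j) = 2)"
proof -
  have "substr T (i - 1) j = T ! (i - 2) # substr T i j"
    using substr_eq_Cons[of "i - 1" j T] assms(1-3) by (simp add: Suc_diff_Suc numeral_2_eq_2)
  moreover have "substr T s t \<noteq> []"
    using assms by (simp add: substr_def)
  moreover have "i - 1 \<le> s"
    using assms(4) by simp
  ultimately show ?thesis
    using minimal_unique_in_lost_by_Cons_iff
    by (simp add: MUS_iff_minimal_unique_in assms(4-6) sqp_eq_shortest_quasi_unique_prefix)
qed

end
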